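(* Let $\mathcal{G}_n$ be the set of binary words $w=w_1\cdots w_{2n}$ with $n$ zeros and $n$ ones. For $w\in\mathcal{G}_n$ define $\mathrm{sz}(w)=|\{i\in[n]: w_i=w_{2n+1-i}=0\}|$, $o_{00}(w)=|\{i\in[n]: w_{2i-1}w_{2i}=00\}|$, and $\#_{001}(w)$ the number of indices $j$ with $w_jw_{j+1}w_{j+2}=001$. Then for all $n,k$, $$|\{w\in\mathcal{G}_n:\mathrm{sz}(w)=k\}|=|\{w\in\mathcal{G}_n:o_{00}(w)=k\}|=|\{w\in\mathcal{G}_n:\#_{001}(w)=k\}|.$$
   Context: $[n]=\{1,2,\dots,n\}$. Occurrences of $001$ are as consecutive subwords. *)

theory Defs
  imports Main
begin

text \<open>Binary words are lists over {0,1} (as naturals); position i (1-based) is w ! (i - 1).\<close>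

definition G :: "nat \<Rightarrow> nat list set" where
  "G n = {w. length w = 2 * n \<and> set w \<subseteq> {0, 1} \<and> length (filter (\<lambda>x. x = 0) w) = n}"

definition sz :: "nat list \<Rightarrow> nat" where
  "sz w = (let n = length w div 2 in
     card {i \<in> {1..n}. w ! (i - 1) = 0 \<and> w ! (2 * n + 1 - i - 1) = 0})"

definition o00 :: "nat list \<Rightarrow> nat" where
  "o00 w = (let n = length w div 2 in
     card {i \<in> {1..n}. w ! (2 * i - 1 - 1) = 0 \<and> w ! (2 * i - 1) = 0})"

definition occ001 :: "nat list \<Rightarrow> nat" where
  "occ001 w = card {j \<in> {1..length w}. j + 2 \<le> length w \<and>
      w ! (j - 1) = 0 \<and> w ! j = 0 \<and> w ! (j + 1) = 1}"

end

theory Submission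
  imports Defs "HOL-Combinatorics.Permutations"
begin

(* Reading w_i next to w_(2n+1-i) is a permutation of positions that turns sz into o00.

   For the second equality, words with o00 = k and words with k occurrences of 001 are both
   encoded bijectively by the pairs (s, b) in codes n k: s is a word of length n over
   Lead0, Lead1, Lead2 with k letters Lead2, and b is a binary word of length #Lead0(s) with
   k ones.  A word is cut into the pairs 1x, 01, 00, recorded in s as Lead0, Lead1, Lead2,
   and b lists the letters x; then the Lead2 are the pairs 00.  Alternatively, each of the
   ones of a word is recorded in s as Lead0, Lead1 or Lead2 according as it is preceded by
   no zero, exactly one zero, or at least two zeros, so that the Lead2 are the occurrences
   of 001; now b keeps the zeros that s does not account for: a run 0^r 1 with r >= 2
   contributes 0^(r-2) 1, and the final run of zeros contributes itself.  Each encoding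
   satisfies one of the conditions |b| = #Lead0(s) and #1(b) = #Lead2(s) automatically, and
   having as many zeros as ones amounts to the other. *)

lemma bij_betw_by_inverse_on_superset:
  assumes "A \<subseteq> W"
    and "\<And>w. w \<in> W \<Longrightarrow> dec (enc w) = w"
    and "\<And>c. c \<in> C \<Longrightarrow> enc (dec c) = c \<and> dec c \<in> W"
    and "\<And>w. w \<in> W \<Longrightarrow> enc w \<in> C \<longleftrightarrow> w \<in> A"
  shows "bij_betw enc A C"
proof (rule bij_betw_byWitness[where f' = dec])
  show "dec ` C \<subseteq> A"
    using assms(3,4) by (metis image_subsetI)
qed (use assms in auto)

lemma card_filter_atLeastAtMost_Suc:
  "card {j \<in> {1..Suc m}. P j} = (if P 1 then 1 else 0) + card {j \<in> {1..m}. P (Suc j)}"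
proof -
  have "{j \<in> {1..Suc m}. P j} = (if P 1 then {1} else {}) \<union> Suc ` {j \<in> {1..m}. P (Suc j)}"
  proof (intro set_eqI iffI)
    fix j
    assume "j \<in> {j \<in> {1..Suc m}. P j}"
    then show "j \<in> (if P 1 then {1} else {}) \<union> Suc ` {j \<in> {1..m}. P (Suc j)}"
      by (cases "j = 1") (auto simp: image_iff intro!: exI[of _ "j - 1"])
  qed (auto split: if_splits)
  then show ?thesis
    by (simp add: card_image card_insert_if image_iff)
qed

lemma occ001_Nil: "occ001 [] = 0"
  by (simp add: occ001_def)

lemma occ001_Cons:
  "occ001 (x # w) = (if x = 0 \<and> take 2 w = [0, 1] then 1 else 0) + occ001 w"
proof -
  define Q where "Q v j \<longleftrightarrow> j + 2 \<le> length v \<and> v ! (j - 1) = 0 \<and> v ! j = 0 \<and> v ! (j + 1) = (1::nat)"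
    for v j
  have occ: "occ001 v = card {j \<in> {1..length v}. Q v j}" for v
    by (simp add: occ001_def Q_def)
  have "Q (x # w) (Suc j) = Q w j" if "j \<in> {1..length w}" for j
    using that by (cases j) (auto simp: Q_def)
  then have "{j \<in> {1..length w}. Q (x # w) (Suc j)} = {j \<in> {1..length w}. Q w j}"
    by blast
  moreover have "Q (x # w) 1 \<longleftrightarrow> x = 0 \<and> take 2 w = [0, 1]"
    by (cases w rule: remdups_adj.cases) (auto simp: Q_def)
  ultimately show ?thesis
    by (simp only: occ length_Cons card_filter_atLeastAtMost_Suc)
qed

lemma o00_short: "o00 [] = 0" "o00 [x] = 0"
  by (simp_all add: o00_def)

lemma o00_Cons_Cons: "o00 (a # b # w) = (if a = 0 \<and> b = 0 then 1 else 0) + o00 w"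
proof -
  define Q where "Q v i \<longleftrightarrow> v ! (2 * i - 1 - 1) = 0 \<and> v ! (2 * i - 1) = (0::nat)" for v i
  have o00: "o00 v = card {i \<in> {1..length v div 2}. Q v i}" for v
    by (simp add: o00_def Q_def)
  have "Q (a # b # w) (Suc i) = Q w i" if "i \<in> {1..length w div 2}" for i
    using that by (cases i) (auto simp: Q_def)
  then have "{i \<in> {1..length w div 2}. Q (a # b # w) (Suc i)} = {i \<in> {1..length w div 2}. Q w i}"
    by blast
  moreover have "length (a # b # w) div 2 = Suc (length w div 2)"
    by simp
  ultimately show ?thesis
    by (simp only: o00 card_filter_atLeastAtMost_Suc) (simp add: Q_def)
qed

lemma G_iff: "w \<in> G n \<longleftrightarrow> length w = 2 * n \<and> set w \<subseteq> {0, 1} \<and> count_list w 0 = n"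
  using filter_cong[of w w "(=) 0" "\<lambda>x. x = 0"] by (auto simp: G_def count_list_eq_length_filter)

lemma count_list_binary: "set (w :: nat list) \<subseteq> {0, 1} \<Longrightarrow> count_list w 0 + count_list w 1 = length w"
  by (induction w) auto

definition fold_ends :: "nat \<Rightarrow> nat \<Rightarrow> nat" where
  "fold_ends n j = (if j < 2 * n then if even j then j div 2 else 2 * n - 1 - j div 2 else j)"

definition unfold_ends :: "nat \<Rightarrow> nat \<Rightarrow> nat" where
  "unfold_ends n i = (if i < n then 2 * i else if i < 2 * n then 2 * (2 * n - 1 - i) + 1 else i)"

lemma fold_ends_permutes: "fold_ends n permutes {..<2 * n}"
proof (rule bij_imp_permutes)
  show "bij_betw (fold_ends n) {..<2 * n} {..<2 * n}"
    by (rule bij_betw_byWitness[where f' = "unfold_ends n"]) (auto simp: fold_ends_def unfold_ends_def)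
qed (simp add: fold_ends_def)

lemma o00_fold_ends:
  assumes "length w = 2 * n"
  shows "o00 (permute_list (fold_ends n) w) = sz w"
proof -
  have nth: "permute_list (fold_ends n) w ! j = w ! fold_ends n j" if "j < 2 * n" for j
    using permute_list_nth[of "fold_ends n" w] fold_ends_permutes that assms by simp
  have "fold_ends n (2 * i - 1 - 1) = i - 1" "fold_ends n (2 * i - 1) = 2 * n + 1 - i - 1"
    if "i \<in> {1..n}" for i
    using that by (auto simp: fold_ends_def)
  then show ?thesis
    unfolding o00_def sz_def Let_def using assms
    by (intro arg_cong[where f = card] Collect_cong) (auto simp: nth)
qed

lemma G_permute_list: "w \<in> G n \<Longrightarrow> \<sigma> permutes {..<2 * n} \<Longrightarrow> permute_list \<sigma> w \<in> G n"
  by (auto simp: G_iff count_mset[symmetric])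

lemma permute_list_inv_permute_list:
  "\<sigma> permutes {..<length xs} \<Longrightarrow> permute_list (inv \<sigma>) (permute_list \<sigma> xs) = xs"
  using permute_list_compose[OF permutes_inv, of \<sigma> xs \<sigma>] by (simp add: permutes_inv_o)

lemma permute_list_permute_list_inv:
  "\<sigma> permutes {..<length xs} \<Longrightarrow> permute_list \<sigma> (permute_list (inv \<sigma>) xs) = xs"
  using permute_list_compose[of \<sigma> xs "inv \<sigma>"] by (simp add: permutes_inv_o)

lemma card_G_eq_by_permute_list:
  assumes \<sigma>: "\<sigma> permutes {..<2 * n}" and stat: "\<And>w. w \<in> G n \<Longrightarrow> g (permute_list \<sigma> w) = f w"
  shows "card {w \<in> G n. f w = k} = card {w \<in> G n. g w = k}"
proof (rule bij_betw_same_card,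
    rule bij_betw_by_inverse_on_superset[where W = "G n" and dec = "permute_list (inv \<sigma>)"])
  have len: "length w = 2 * n" if "w \<in> G n" for w
    using that by (simp add: G_iff)
  show "permute_list (inv \<sigma>) (permute_list \<sigma> w) = w" if "w \<in> G n" for w
    using that \<sigma> by (simp add: len permute_list_inv_permute_list)
  show "permute_list \<sigma> (permute_list (inv \<sigma>) v) = v \<and> permute_list (inv \<sigma>) v \<in> G n"
    if "v \<in> {w \<in> G n. g w = k}" for v
    using that \<sigma> by (simp add: len permute_list_permute_list_inv G_permute_list permutes_inv)
qed (use \<sigma> in \<open>auto simp: G_permute_list stat\<close>)

lemma card_sz_eq_card_o00: "card {w \<in> G n. sz w = k} = card {w \<in> G n. o00 w = k}"
  by (rule card_G_eq_by_permute_list[OF fold_ends_permutes]) (simp add: G_iff o00_fold_ends)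

datatype lead = Lead0 | Lead1 | Lead2

lemma count_list_leads: "count_list s Lead0 + count_list s Lead1 + count_list s Lead2 = length s"
proof (induction s)
  case (Cons x s)
  then show ?case by (cases x) auto
qed simp

definition codes :: "nat \<Rightarrow> nat \<Rightarrow> (lead list \<times> nat list) set" where
  "codes n k = {(s, b). length s = n \<and> count_list s Lead2 = k \<and> length b = count_list s Lead0
                        \<and> set b \<subseteq> {0, 1} \<and> count_list b 1 = k}"

fun pair_leads :: "nat list \<Rightarrow> lead list" where
  "pair_leads (0 # 0 # w) = Lead2 # pair_leads w"
| "pair_leads (0 # Suc _ # w) = Lead1 # pair_leads w"
| "pair_leads (Suc _ # _ # w) = Lead0 # pair_leads w"
| "pair_leads _ = []"

fun pair_bits :: "nat list \<Rightarrow> nat list" where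
  "pair_bits (0 # _ # w) = pair_bits w"
| "pair_bits (Suc _ # b # w) = b # pair_bits w"
| "pair_bits _ = []"

fun pair_decode :: "lead list \<Rightarrow> nat list \<Rightarrow> nat list" where
  "pair_decode (Lead2 # s) b = 0 # 0 # pair_decode s b"
| "pair_decode (Lead1 # s) b = 0 # 1 # pair_decode s b"
| "pair_decode (Lead0 # s) (x # b) = 1 # x # pair_decode s b"
| "pair_decode _ _ = []"

lemma pair_decode_pair_code:
  "set w \<subseteq> {0, 1} \<Longrightarrow> even (length w) \<Longrightarrow> pair_decode (pair_leads w) (pair_bits w) = w"
  by (induction w rule: pair_leads.induct) auto

lemma pair_code_pair_decode:
  "length b = count_list s Lead0 \<Longrightarrow> pair_leads (pair_decode s b) = s \<and> pair_bits (pair_decode s b) = b"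
  by (induction s b rule: pair_decode.induct) auto

lemma length_pair_leads: "length (pair_leads w) = length w div 2"
  by (induction w rule: pair_leads.induct) auto

lemma count_pair_leads_Lead2: "count_list (pair_leads w) Lead2 = o00 w"
  by (induction w rule: pair_leads.induct) (simp_all add: o00_Cons_Cons o00_short)

lemma length_pair_bits: "length (pair_bits w) = count_list (pair_leads w) Lead0"
  by (induction w rule: pair_leads.induct) auto

lemma set_pair_bits: "set (pair_bits w) \<subseteq> set w"
  by (induction w rule: pair_bits.induct) auto

lemma count_zeros_pair_code:
  "set w \<subseteq> {0, 1} \<Longrightarrow> even (length w) \<Longrightarrow> count_list w 0 =
     2 * count_list (pair_leads w) Lead2 + count_list (pair_leads w) Lead1 + count_list (pair_bits w) 0"
  by (induction w rule: pair_leads.induct) auto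

lemma set_pair_decode: "set b \<subseteq> {0, 1} \<Longrightarrow> set (pair_decode s b) \<subseteq> {0, 1}"
  by (induction s b rule: pair_decode.induct) auto

lemma length_pair_decode: "length b = count_list s Lead0 \<Longrightarrow> length (pair_decode s b) = 2 * length s"
  by (induction s b rule: pair_decode.induct) auto

lemma pair_code_in_codes_iff:
  assumes "set w \<subseteq> {0, 1}" and "length w = 2 * n"
  shows "(pair_leads w, pair_bits w) \<in> codes n k \<longleftrightarrow> w \<in> G n \<and> o00 w = k"
proof -
  let ?s = "pair_leads w" and ?b = "pair_bits w"
  have "set ?b \<subseteq> {0, 1}"
    using set_pair_bits assms(1) by blast
  then have "count_list ?b 0 + count_list ?b 1 = count_list ?s Lead0"
    using count_list_binary by (simp add: length_pair_bits)
  moreover have "count_list w 0 = 2 * count_list ?s Lead2 + count_list ?s Lead1 + count_list ?b 0"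
    using assms by (simp add: count_zeros_pair_code)
  moreover have "count_list ?s Lead0 + count_list ?s Lead1 + count_list ?s Lead2 = n"
    using assms by (simp add: count_list_leads length_pair_leads)
  ultimately show ?thesis
    using assms \<open>set ?b \<subseteq> {0, 1}\<close>
    by (auto simp: codes_def G_iff length_pair_leads length_pair_bits count_pair_leads_Lead2)
qed

lemma bij_betw_pair_code:
  "bij_betw (\<lambda>w. (pair_leads w, pair_bits w)) {w \<in> G n. o00 w = k} (codes n k)"
proof (rule bij_betw_by_inverse_on_superset[where W = "{w. set w \<subseteq> {0, 1} \<and> length w = 2 * n}"
      and dec = "case_prod pair_decode"])
  fix c assume "c \<in> codes n k"
  then show "(pair_leads (case_prod pair_decode c), pair_bits (case_prod pair_decode c)) = c
      \<and> case_prod pair_decode c \<in> {w. set w \<subseteq> {0, 1} \<and> length w = 2 * n}"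
    using set_pair_decode length_pair_decode by (auto simp: codes_def pair_code_pair_decode)
qed (auto simp: G_iff pair_decode_pair_code pair_code_in_codes_iff)

fun leads001 :: "nat list \<Rightarrow> lead list" where
  "leads001 (0 # 0 # 0 # w) = leads001 (0 # 0 # w)"
| "leads001 (0 # 0 # Suc _ # w) = Lead2 # leads001 w"
| "leads001 (0 # Suc _ # w) = Lead1 # leads001 w"
| "leads001 (Suc _ # w) = Lead0 # leads001 w"
| "leads001 _ = []"

fun bits001 :: "nat list \<Rightarrow> nat list" where
  "bits001 (0 # 0 # 0 # w) = 0 # bits001 (0 # 0 # w)"
| "bits001 (0 # 0 # Suc _ # w) = 1 # bits001 w"
| "bits001 (0 # Suc _ # w) = bits001 w"
| "bits001 (Suc _ # w) = bits001 w"
| "bits001 w = w"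

fun decode001 :: "lead list \<Rightarrow> nat list \<Rightarrow> nat list" where
  "decode001 (Lead0 # s) b = 1 # decode001 s b"
| "decode001 (Lead1 # s) b = 0 # 1 # decode001 s b"
| "decode001 (Lead2 # s) (0 # b) = 0 # decode001 (Lead2 # s) b"
| "decode001 (Lead2 # s) (Suc _ # b) = 0 # 0 # 1 # decode001 s b"
| "decode001 (Lead2 # s) [] = []"
| "decode001 [] b = b"

lemma leads001_zero_zero: "leads001 (0 # 0 # w) = [] \<or> hd (leads001 (0 # 0 # w)) = Lead2"
proof (induction w)
  case (Cons x w)
  then show ?case by (cases x) auto
qed simp

lemma decode001_Cons_zero: "s = [] \<or> hd s = Lead2 \<Longrightarrow> decode001 s (0 # b) = 0 # decode001 s b"
  by (cases s) auto

lemma decode001_code001: "set w \<subseteq> {0, 1} \<Longrightarrow> decode001 (leads001 w) (bits001 w) = w"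
proof (induction w rule: leads001.induct)
  case (1 w)
  then show ?case
    using leads001_zero_zero decode001_Cons_zero by simp
qed auto

lemma code001_zeros: "set w \<subseteq> {0} \<Longrightarrow> leads001 w = [] \<and> bits001 w = w"
  by (induction w rule: leads001.induct) auto

lemma decode001_Lead2_prefix:
  "1 \<in> set b \<Longrightarrow> \<exists>r. decode001 (Lead2 # s) b = 0 # 0 # r"
proof (induction b)
  case (Cons x b)
  then show ?case by (cases x) auto
qed simp

lemma code001_decode001:
  "set b \<subseteq> {0, 1} \<Longrightarrow> count_list b 1 = count_list s Lead2
     \<Longrightarrow> leads001 (decode001 s b) = s \<and> bits001 (decode001 s b) = b"
proof (induction s b rule: decode001.induct)
  case (3 s b)
  then have "1 \<in> set b"
    using count_list_0_iff by fastforce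
  then obtain r where "decode001 (Lead2 # s) b = 0 # 0 # r"
    using decode001_Lead2_prefix by blast
  with 3 show ?case by simp
next
  case (6 b)
  then have "set b \<subseteq> {0}"
    using count_list_0_iff by fastforce
  then show ?case by (simp add: code001_zeros)
qed auto

lemma length_leads001: "set w \<subseteq> {0, 1} \<Longrightarrow> length (leads001 w) = count_list w 1"
  by (induction w rule: leads001.induct) auto

lemma count_leads001_Lead2: "set w \<subseteq> {0, 1} \<Longrightarrow> count_list (leads001 w) Lead2 = occ001 w"
  by (induction w rule: leads001.induct) (auto simp: occ001_Cons occ001_Nil)

lemma count_bits001_one: "count_list (bits001 w) 1 = count_list (leads001 w) Lead2"
  by (induction w rule: leads001.induct) auto

lemma set_bits001: "set (bits001 w) \<subseteq> {0, 1}"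
  by (induction w rule: leads001.induct) auto

lemma count_zeros_code001:
  "count_list w 0 = length (bits001 w) + count_list (leads001 w) Lead2 + count_list (leads001 w) Lead1"
  by (induction w rule: leads001.induct) auto

lemma set_decode001: "set b \<subseteq> {0, 1} \<Longrightarrow> set (decode001 s b) \<subseteq> {0, 1}"
  by (induction s b rule: decode001.induct) auto

lemma code001_in_codes_iff:
  assumes "set w \<subseteq> {0, 1}"
  shows "(leads001 w, bits001 w) \<in> codes n k \<longleftrightarrow> w \<in> G n \<and> occ001 w = k"
proof -
  let ?s = "leads001 w" and ?b = "bits001 w"
  have "count_list w 0 + length ?s = length w"
    using assms count_list_binary by (simp add: length_leads001)
  moreover have "count_list ?s Lead0 + count_list ?s Lead1 + count_list ?s Lead2 = length ?s"
    by (rule count_list_leads)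
  moreover have "set ?b \<subseteq> {0, 1}" "count_list ?b 1 = occ001 w"
    using set_bits001[of w] count_bits001_one[of w] count_leads001_Lead2[OF assms] by simp_all
  ultimately show ?thesis
    using assms count_zeros_code001[of w] by (auto simp: codes_def G_iff count_leads001_Lead2)
qed

lemma bij_betw_code001:
  "bij_betw (\<lambda>w. (leads001 w, bits001 w)) {w \<in> G n. occ001 w = k} (codes n k)"
proof (rule bij_betw_by_inverse_on_superset[where W = "{w. set w \<subseteq> {0, 1}}"
      and dec = "case_prod decode001"])
  fix c assume "c \<in> codes n k"
  then show "(leads001 (case_prod decode001 c), bits001 (case_prod decode001 c)) = c
      \<and> case_prod decode001 c \<in> {w. set w \<subseteq> {0, 1}}"
    using set_decode001 by (auto simp: codes_def code001_decode001)
qed (auto simp: G_iff decode001_code001 code001_in_codes_iff)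

theorem theorem3p3:
  fixes n k :: nat
  shows "card {w \<in> G n. sz w = k} = card {w \<in> G n. o00 w = k}
       \<and> card {w \<in> G n. o00 w = k} = card {w \<in> G n. occ001 w = k}"
proof
  show "card {w \<in> G n. sz w = k} = card {w \<in> G n. o00 w = k}"
    by (rule card_sz_eq_card_o00)
  have "card {w \<in> G n. o00 w = k} = card (codes n k)"
    by (rule bij_betw_same_card[OF bij_betw_pair_code])
  also have "\<dots> = card {w \<in> G n. occ001 w = k}"
    by (rule bij_betw_same_card[OF bij_betw_code001, symmetric])
  finally show "card {w \<in> G n. o00 w = k} = card {w \<in> G n. occ001 w = k}" .
qed

end
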